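(* Let $c\ge 1$ be an integer. The $c$-indistinguishable finite bias distributions are in one-to-one correspondence with the symmetric quadrature systems of degree $c-1$, via the following mutually inverse maps. (i) For a symmetric quadrature system $\mathcal{Q}=(X,\omega)$ of degree $c-1$, let $\mathcal{P}(\mathcal{Q})$ be the distribution that takes the value $\frac{1+\xi}{2}$ with probability $\frac{\omega(\xi)}{C\sqrt{1-\xi^2}}$ for each $\xi\in X$, where $C=\sum_{\xi\in X}\omega(\xi)/\sqrt{1-\xi^2}$. (ii) For a $c$-indistinguishable finite bias distribution $\mathcal{P}$ taking the values $p_1,\dots,p_k$ with probabilities $q_1,\dots,q_k$ respectively, let $\mathcal{Q}(\mathcal{P})=(\{\xi_1,\dots,\xi_k\},\omega)$ with $\xi_i=2p_i-1$ and $\omega(\xi_i)=\sqrt{p_i(1-p_i)}\,q_i/C'$, where $C'=\sum_{i=1}^k\sqrt{p_i(1-p_i)}\,q_i/2$. Then $\mathcal{P}(\mathcal{Q})$ is a $c$-indistinguishable finite bias distribution, $\mathcal{Q}(\mathcal{P})$ is a symmetric quadrature system of degree $c-1$, $\mathcal{Q}(\mathcal{P}(\mathcal{Q}))=\mathcal{Q}$ and $\mathcal{P}(\mathcal{Q}(\mathcal{P}))=\mathcal{P}$.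
   Context: A finite bias distribution is a probability distribution $\mathcal{P}$ supported on a finite subset of the open interval $(0,1)$ that is symmetric: for every $a$, $\mathcal{P}$ outputs $a$ and $1-a$ with the same probability. $E_p$ denotes expectation over $p$ drawn from $\mathcal{P}$. For $0<p<1$ put $\sigma(p)=\sqrt{(1-p)/p}$, and for integers $\ell\ge 1$, $0\le x\le\ell$ put $f_{\ell,x}(p)=p^x(1-p)^{\ell-x}\bigl(x\sigma(p)-(\ell-x)\sigma(1-p)\bigr)$ and $R_{\ell,x}=\max\{0,E_p[f_{\ell,x}(p)]\}$. For a positive integer $c$, $\mathcal{P}$ is called $c$-indistinguishable if $\sum_{x=1}^{\ell-1}\binom{\ell}{x}R_{\ell,x}=0$ for all $2\le\ell\le c$. A quadrature system (QS) of degree $d$ is a pair $(X,\omega)$ where $X$ is a finite subset of $(-1,1)$ and $\omega:X\to(0,\infty)$, such that $\int_{-1}^1F(t)\,dt=\sum_{\xi\in X}\omega(\xi)F(\xi)$ for every real polynomial $F$ of degree at most $d$. Its order is $|X|$. It is symmetric if $-X=X$ and $\omega(-\xi)=\omega(\xi)$ for all $\xi\in X$. *)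

theory Defs
  imports "HOL-Analysis.Analysis" "HOL-Probability.Probability_Mass_Function"
    "HOL-Computational_Algebra.Polynomial"
begin

definition finite_bias_dist :: "real pmf \<Rightarrow> bool" where
  "finite_bias_dist P \<longleftrightarrow> finite (set_pmf P) \<and> set_pmf P \<subseteq> {0<..<1} \<and>
     (\<forall>a. pmf P a = pmf P (1 - a))"

definition sigma :: "real \<Rightarrow> real" where
  "sigma p = sqrt ((1 - p) / p)"

definition f_bias :: "nat \<Rightarrow> nat \<Rightarrow> real \<Rightarrow> real" where
  "f_bias l x p = p ^ x * (1 - p) ^ (l - x) *
      (real x * sigma p - real (l - x) * sigma (1 - p))"

definition R_bias :: "real pmf \<Rightarrow> nat \<Rightarrow> nat \<Rightarrow> real" where
  "R_bias P l x = max 0 (measure_pmf.expectation P (f_bias l x))"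

definition c_indist :: "nat \<Rightarrow> real pmf \<Rightarrow> bool" where
  "c_indist c P \<longleftrightarrow> (\<forall>l. 2 \<le> l \<and> l \<le> c \<longrightarrow>
      (\<Sum>x = 1..l - 1. real (l choose x) * R_bias P l x) = 0)"

text \<open>Quadrature systems: a node set X and a weight function \<omega> (only its values on X matter).\<close>

definition quad_system :: "nat \<Rightarrow> real set \<Rightarrow> (real \<Rightarrow> real) \<Rightarrow> bool" where
  "quad_system d X \<omega> \<longleftrightarrow> finite X \<and> X \<subseteq> {-1<..<1} \<and> (\<forall>\<xi>\<in>X. \<omega> \<xi> > 0) \<and>
     (\<forall>F :: real poly. degree F \<le> d \<longrightarrow>
        integral {-1..1} (poly F) = (\<Sum>\<xi>\<in>X. \<omega> \<xi> * poly F \<xi>))"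

definition symmetric_qs :: "real set \<Rightarrow> (real \<Rightarrow> real) \<Rightarrow> bool" where
  "symmetric_qs X \<omega> \<longleftrightarrow> uminus ` X = X \<and> (\<forall>\<xi>\<in>X. \<omega> (- \<xi>) = \<omega> \<xi>)"

definition P_of_Q :: "real set \<Rightarrow> (real \<Rightarrow> real) \<Rightarrow> real pmf" where
  "P_of_Q X \<omega> = (let C = (\<Sum>\<xi>\<in>X. \<omega> \<xi> / sqrt (1 - \<xi>^2)) in
     embed_pmf (\<lambda>a. if 2 * a - 1 \<in> X
        then \<omega> (2 * a - 1) / (C * sqrt (1 - (2 * a - 1)^2)) else 0))"

definition Q_nodes :: "real pmf \<Rightarrow> real set" where
  "Q_nodes P = (\<lambda>p. 2 * p - 1) ` set_pmf P"

definition Q_weight :: "real pmf \<Rightarrow> real \<Rightarrow> real" where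
  "Q_weight P = (let C' = (\<Sum>p\<in>set_pmf P. sqrt (p * (1 - p)) * pmf P p / 2) in
     (\<lambda>\<xi>. let p = (1 + \<xi>) / 2 in sqrt (p * (1 - p)) * pmf P p / C'))"

end

theory Submission
  imports Defs
begin

text \<open>With \<open>p = (1 + \<xi>) / 2\<close> one has \<open>sqrt (p * (1 - p)) = sqrt (1 - \<xi>\<^sup>2) / 2\<close>; this factor converts
  the probabilities of a bias distribution into quadrature weights and back, which makes the two
  maps mutually inverse.

  For \<open>1 \<le> x < l\<close> the bias function factors as \<open>f_bias l x p = sqrt (p * (1 - p)) * h p\<close>, where
  \<open>h p = p ^ (x - 1) * (1 - p) ^ (l - x - 1) * (x - l * p)\<close> is the derivative of
  \<open>p ^ x * (1 - p) ^ (l - x)\<close>. So \<open>h\<close> is a polynomial of degree \<open>l - 1\<close> with integral zero over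
  \<open>[0, 1]\<close>, and a quadrature system of degree \<open>c - 1\<close> makes every \<open>E[f_bias l x]\<close> with \<open>l \<le> c\<close>
  vanish. Conversely, for a symmetric distribution \<open>E[f_bias l (l - x)] = - E[f_bias l x]\<close>, so
  \<open>c\<close>-indistinguishability, which only says that these expectations are nonpositive, forces all of
  them to vanish. For \<open>x = l - 1\<close> this is the recurrence \<open>(k + 1) m k = (k + 2) m (k + 1)\<close> for the
  weighted moments \<open>m k = E[sqrt (p * (1 - p)) * p ^ k]\<close>, whence \<open>m k = m 0 / (k + 1)\<close>, i.e.
  \<open>m 0\<close> times the \<open>k\<close>-th moment of the uniform distribution on \<open>[0, 1]\<close>, for all \<open>k \<le> c - 1\<close>.
  That is exactly the exactness of the induced quadrature system.\<close>

definition bias_kernel :: "nat \<Rightarrow> nat \<Rightarrow> real poly" where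
  "bias_kernel u v = monom 1 u * [:1, -1:] ^ v * [:real (Suc u), - real (u + v + 2):]"

lemma poly_bias_kernel:
  "poly (bias_kernel u v) p = p ^ u * (1 - p) ^ v * (real (Suc u) - real (u + v + 2) * p)"
  by (simp add: bias_kernel_def poly_monom algebra_simps)

lemma degree_bias_kernel: "degree (bias_kernel u v) \<le> u + v + 1"
proof -
  have "degree (bias_kernel u v) \<le> u + v * degree [:1, -1::real:] + degree [:real (Suc u), - real (u + v + 2):]"
    unfolding bias_kernel_def
    by (intro degree_mult_le[THEN order_trans] add_mono degree_power_le[THEN order_trans]) (auto simp: degree_monom_eq)
  then show ?thesis by simp
qed

lemma has_real_derivative_bias_kernel:
  "((\<lambda>p. p ^ Suc u * (1 - p) ^ Suc v) has_real_derivative poly (bias_kernel u v) p) (at p)"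
proof -
  have "((\<lambda>p. p ^ Suc u * (1 - p) ^ Suc v) has_real_derivative
      (1 + real u) * (1 * p ^ u) * (1 - p) ^ Suc v + (1 + real v) * (- 1 * (1 - p) ^ v) * p ^ Suc u) (at p)"
    by (intro DERIV_mult' DERIV_power_Suc derivative_eq_intros) auto
  moreover have "(1 + real u) * (1 * p ^ u) * (1 - p) ^ Suc v + (1 + real v) * (- 1 * (1 - p) ^ v) * p ^ Suc u
      = poly (bias_kernel u v) p"
    by (simp add: poly_bias_kernel algebra_simps)
  ultimately show ?thesis by simp
qed

lemma f_bias_eq_bias_kernel:
  assumes "0 < p" "p < 1"
  shows "f_bias (u + v + 2) (Suc u) p = sqrt (p * (1 - p)) * poly (bias_kernel u v) p"
proof -
  define a b where "a = sqrt p" and "b = sqrt (1 - p)"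
  have ab: "a > 0" "b > 0" "a * a = p" "b * b = 1 - p"
    using assms by (auto simp: a_def b_def)
  have sigma: "sigma p = b / a" "sigma (1 - p) = a / b"
    by (simp_all add: sigma_def a_def b_def real_sqrt_divide)
  have "f_bias (u + v + 2) (Suc u) p =
      p ^ u * (1 - p) ^ v * ((a * a) * (b * b) * (real (Suc u) * (b / a) - real (Suc v) * (a / b)))"
    unfolding f_bias_def sigma ab(3,4) by (simp add: mult_ac)
  also have "(a * a) * (b * b) * (real (Suc u) * (b / a) - real (Suc v) * (a / b))
      = a * b * (real (Suc u) * (b * b) - real (Suc v) * (a * a))"
    using ab(1,2) by (simp add: field_simps)
  also have "a * b = sqrt (p * (1 - p))"
    by (simp add: a_def b_def real_sqrt_mult)
  finally show ?thesis
    unfolding poly_bias_kernel ab(3,4) by (simp add: algebra_simps)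
qed

lemma f_bias_one_minus: "x \<le> l \<Longrightarrow> f_bias l (l - x) (1 - p) = - f_bias l x p"
  by (simp add: f_bias_def algebra_simps)

section \<open>Integrals of rescaled polynomials\<close>

lemma has_integral_rescaled_antiderivative:
  fixes K k :: "real \<Rightarrow> real"
  assumes "\<And>p. (K has_real_derivative k p) (at p)"
  shows "((\<lambda>t. k ((1 + t) / 2)) has_integral 2 * (K 1 - K 0)) {-1..1}"
proof -
  have "((\<lambda>t. 2 * K ((1 + t) / 2)) has_real_derivative 2 * (k ((1 + t) / 2) * (1 / 2))) (at t)" for t
    by (intro DERIV_cmult DERIV_chain2[OF assms]) (auto intro!: derivative_eq_intros)
  then have "((\<lambda>t. k ((1 + t) / 2)) has_integral 2 * K ((1 + 1) / 2) - 2 * K ((1 + - 1) / 2)) {-1..1}"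
    by (intro fundamental_theorem_of_calculus)
       (auto simp: has_real_derivative_iff_has_vector_derivative[symmetric] intro: has_field_derivative_at_within)
  then show ?thesis by (simp add: algebra_simps)
qed

lemma has_integral_poly_rescaled:
  "((\<lambda>t. poly G ((1 + t) / 2)) has_integral (\<Sum>k\<le>degree G. coeff G k * (2 / real (Suc k)))) {-1..1}"
proof -
  have "((\<lambda>t. ((1 + t) / 2) ^ k) has_integral 2 / real (Suc k)) {-1..1}" for k
  proof -
    have "((\<lambda>p. p ^ Suc k / real (Suc k)) has_real_derivative p ^ k) (at p)" for p :: real
      using DERIV_cdivide[OF DERIV_pow[of "Suc k" p], of "real (Suc k)"] by simp
    from has_integral_rescaled_antiderivative[OF this] show ?thesis by simp
  qed
  then show ?thesis
    unfolding poly_altdef by (intro has_integral_sum has_integral_mult_right) auto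
qed

lemma has_integral_bias_kernel_rescaled:
  "((\<lambda>t. poly (bias_kernel u v) ((1 + t) / 2)) has_integral 0) {-1..1}"
  using has_integral_rescaled_antiderivative[OF has_real_derivative_bias_kernel] by simp

lemma finite_bias_distD:
  assumes "finite_bias_dist P"
  shows "finite (set_pmf P)" "set_pmf P \<subseteq> {0<..<1}" "pmf P (1 - a) = pmf P a"
  using assms by (simp_all add: finite_bias_dist_def)

lemma map_pmf_one_minus:
  assumes "finite_bias_dist P"
  shows "map_pmf (\<lambda>p. 1 - p) P = P"
proof (rule pmf_eqI)
  fix a :: real
  have "pmf (map_pmf (\<lambda>p. 1 - p) P) (1 - (1 - a)) = pmf P (1 - a)"
    by (rule pmf_map_inj') (simp add: inj_on_def)
  also have "\<dots> = pmf P a"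
    using assms by (rule finite_bias_distD)
  finally show "pmf (map_pmf (\<lambda>p. 1 - p) P) a = pmf P a" by simp
qed

definition weighted_moment :: "real pmf \<Rightarrow> nat \<Rightarrow> real" where
  "weighted_moment P k = measure_pmf.expectation P (\<lambda>p. sqrt (p * (1 - p)) * p ^ k)"

lemma Q_weight_eq:
  assumes "finite (set_pmf P)"
  shows "Q_weight P (2 * p - 1) = 2 * sqrt (p * (1 - p)) * pmf P p / weighted_moment P 0"
proof -
  have "weighted_moment P 0 = (\<Sum>p\<in>set_pmf P. sqrt (p * (1 - p)) * pmf P p)"
    unfolding weighted_moment_def using assms by (simp add: integral_measure_pmf_real)
  then show ?thesis
    by (simp add: Q_weight_def Let_def sum_divide_distrib[symmetric])
qed

lemma c_indist_iff_expectation_nonpos: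
  "c_indist c P \<longleftrightarrow>
     (\<forall>l x. 2 \<le> l \<longrightarrow> l \<le> c \<longrightarrow> 1 \<le> x \<longrightarrow> x < l \<longrightarrow> measure_pmf.expectation P (f_bias l x) \<le> 0)"
proof -
  have "(\<Sum>x = 1..l - 1. real (l choose x) * R_bias P l x) = 0 \<longleftrightarrow>
      (\<forall>x. 1 \<le> x \<longrightarrow> x < l \<longrightarrow> measure_pmf.expectation P (f_bias l x) \<le> 0)" if "2 \<le> l" for l
  proof -
    have "(\<Sum>x = 1..l - 1. real (l choose x) * R_bias P l x) = 0 \<longleftrightarrow>
        (\<forall>x\<in>{1..l - 1}. real (l choose x) * R_bias P l x = 0)"
      by (intro sum_nonneg_eq_0_iff) (auto simp: R_bias_def)
    also have "\<dots> \<longleftrightarrow> (\<forall>x\<in>{1..l - 1}. measure_pmf.expectation P (f_bias l x) \<le> 0)"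
      by (intro ball_cong refl) (auto simp: R_bias_def max_def)
    finally show ?thesis
      using that by auto
  qed
  then show ?thesis
    unfolding c_indist_def by auto
qed

lemma c_indist_iff_expectation_zero:
  assumes "finite_bias_dist P"
  shows "c_indist c P \<longleftrightarrow>
     (\<forall>l x. 2 \<le> l \<longrightarrow> l \<le> c \<longrightarrow> 1 \<le> x \<longrightarrow> x < l \<longrightarrow> measure_pmf.expectation P (f_bias l x) = 0)"
  unfolding c_indist_iff_expectation_nonpos
proof (intro iffI allI impI)
  fix l x
  assume nonpos: "\<forall>l x. 2 \<le> l \<longrightarrow> l \<le> c \<longrightarrow> 1 \<le> x \<longrightarrow> x < l \<longrightarrow> measure_pmf.expectation P (f_bias l x) \<le> 0"
    and l: "2 \<le> l" "l \<le> c" and x: "1 \<le> x" "x < l"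
  have "measure_pmf.expectation P (f_bias l (l - x))
      = measure_pmf.expectation (map_pmf (\<lambda>p. 1 - p) P) (f_bias l (l - x))"
    by (simp only: map_pmf_one_minus[OF assms])
  also have "\<dots> = - measure_pmf.expectation P (f_bias l x)"
    using x by (simp add: f_bias_one_minus)
  finally have "measure_pmf.expectation P (f_bias l (l - x)) = - measure_pmf.expectation P (f_bias l x)" .
  moreover have "measure_pmf.expectation P (f_bias l x) \<le> 0" "measure_pmf.expectation P (f_bias l (l - x)) \<le> 0"
    using nonpos l x by auto
  ultimately show "measure_pmf.expectation P (f_bias l x) = 0"
    by linarith
qed auto

lemma expectation_f_bias:
  assumes "set_pmf P \<subseteq> {0<..<1}"
  shows "measure_pmf.expectation P (f_bias (u + v + 2) (Suc u))
    = measure_pmf.expectation P (\<lambda>p. sqrt (p * (1 - p)) * poly (bias_kernel u v) p)"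
proof (intro integral_cong_AE AE_pmfI)
  fix p assume "p \<in> set_pmf P"
  then have "0 < p" "p < 1"
    using assms by auto
  then show "f_bias (u + v + 2) (Suc u) p = sqrt (p * (1 - p)) * poly (bias_kernel u v) p"
    by (rule f_bias_eq_bias_kernel)
qed simp_all

lemma c_indist_iff_bias_kernel:
  assumes "finite_bias_dist P"
  shows "c_indist c P \<longleftrightarrow> (\<forall>u v. u + v + 2 \<le> c \<longrightarrow>
     measure_pmf.expectation P (\<lambda>p. sqrt (p * (1 - p)) * poly (bias_kernel u v) p) = 0)"
proof -
  have reindex: "(\<forall>l x. 2 \<le> l \<longrightarrow> l \<le> c \<longrightarrow> 1 \<le> x \<longrightarrow> x < l \<longrightarrow> \<Phi> l x) \<longleftrightarrow>
      (\<forall>u v. u + v + 2 \<le> c \<longrightarrow> \<Phi> (u + v + 2) (Suc u))" for \<Phi> :: "nat \<Rightarrow> nat \<Rightarrow> bool"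
  proof safe
    fix l x assume "\<forall>u v. u + v + 2 \<le> c \<longrightarrow> \<Phi> (u + v + 2) (Suc u)" "l \<le> c" "1 \<le> x" "x < l"
    moreover have "x - 1 + (l - x - 1) + 2 = l" "Suc (x - 1) = x"
      using \<open>1 \<le> x\<close> \<open>x < l\<close> by auto
    ultimately show "\<Phi> l x"
      by metis
  qed auto
  show ?thesis
    unfolding c_indist_iff_expectation_zero[OF assms] reindex
    by (simp only: expectation_f_bias[OF finite_bias_distD(2)[OF assms]])
qed

section \<open>From quadrature systems to bias distributions\<close>

definition node_normalizer :: "real set \<Rightarrow> (real \<Rightarrow> real) \<Rightarrow> real" where
  "node_normalizer X \<omega> = (\<Sum>\<xi>\<in>X. \<omega> \<xi> / sqrt (1 - \<xi>\<^sup>2))"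

lemma rescale_inverse: "2 * ((1 + \<xi>) / 2) - 1 = (\<xi>::real)" "(1 + (2 * p - 1)) / 2 = (p::real)"
  by (simp_all add: field_simps)

lemma sqrt_one_minus_square_rescaled: "sqrt (1 - (2 * p - 1)\<^sup>2) = 2 * sqrt (p * (1 - p))"
proof -
  have "1 - (2 * p - 1)\<^sup>2 = 2\<^sup>2 * (p * (1 - p))"
    by (simp add: power2_eq_square algebra_simps)
  then show ?thesis by (simp add: real_sqrt_mult)
qed

lemma sqrt_bernoulli_variance_rescaled: "sqrt ((1 + \<xi>) / 2 * (1 - (1 + \<xi>) / 2)) = sqrt (1 - \<xi>\<^sup>2) / 2"
  using sqrt_one_minus_square_rescaled[of "(1 + \<xi>) / 2"] unfolding rescale_inverse by simp

locale node_weights =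
  fixes X :: "real set" and \<omega> :: "real \<Rightarrow> real"
  assumes finite_nodes: "finite X"
    and nodes_in_interval: "X \<subseteq> {-1<..<1}"
    and nodes_nonempty: "X \<noteq> {}"
    and weights_pos: "\<And>\<xi>. \<xi> \<in> X \<Longrightarrow> \<omega> \<xi> > 0"
begin

lemma sqrt_one_minus_square_node_pos: "\<xi> \<in> X \<Longrightarrow> sqrt (1 - \<xi>\<^sup>2) > 0"
  using nodes_in_interval by (auto simp: abs_square_less_1 abs_less_iff)

lemma node_normalizer_pos: "node_normalizer X \<omega> > 0"
  unfolding node_normalizer_def using finite_nodes nodes_nonempty
  by (intro sum_pos) (auto intro: divide_pos_pos weights_pos sqrt_one_minus_square_node_pos)

lemma pmf_P_of_Q:
  "pmf (P_of_Q X \<omega>) a =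
     (if 2 * a - 1 \<in> X then \<omega> (2 * a - 1) / (node_normalizer X \<omega> * sqrt (1 - (2 * a - 1)\<^sup>2)) else 0)"
proof -
  define f where "f = (\<lambda>a. if 2 * a - 1 \<in> X
      then \<omega> (2 * a - 1) / (node_normalizer X \<omega> * sqrt (1 - (2 * a - 1)\<^sup>2)) else 0)"
  have f_nonneg: "0 \<le> f a" for a
    unfolding f_def using node_normalizer_pos weights_pos sqrt_one_minus_square_node_pos
    by (auto intro!: divide_nonneg_pos less_imp_le)
  have "(\<integral>\<^sup>+ a. ennreal (f a) \<partial>count_space UNIV) = (\<Sum>a\<in>(\<lambda>\<xi>. (1 + \<xi>) / 2) ` X. ennreal (f a))"
    using finite_nodes by (intro nn_integral_count_space') (force simp: f_def)+
  also have "\<dots> = ennreal (\<Sum>\<xi>\<in>X. f ((1 + \<xi>) / 2))"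
    using f_nonneg by (simp add: sum.reindex inj_on_def)
  also have "(\<Sum>\<xi>\<in>X. f ((1 + \<xi>) / 2)) = node_normalizer X \<omega> / node_normalizer X \<omega>"
    unfolding f_def node_normalizer_def sum_divide_distrib rescale_inverse by (intro sum.cong) auto
  finally have "(\<integral>\<^sup>+ a. ennreal (f a) \<partial>count_space UNIV) = 1"
    using node_normalizer_pos by simp
  then have "pmf (embed_pmf f) a = f a"
    using f_nonneg by (intro pmf_embed_pmf)
  moreover have "P_of_Q X \<omega> = embed_pmf f"
    unfolding P_of_Q_def f_def node_normalizer_def Let_def ..
  ultimately show ?thesis
    by (simp add: f_def)
qed

lemma pmf_P_of_Q_node:
  "\<xi> \<in> X \<Longrightarrow> pmf (P_of_Q X \<omega>) ((1 + \<xi>) / 2) = \<omega> \<xi> / (node_normalizer X \<omega> * sqrt (1 - \<xi>\<^sup>2))"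
  by (simp only: pmf_P_of_Q rescale_inverse if_True)

lemma set_pmf_P_of_Q: "set_pmf (P_of_Q X \<omega>) = (\<lambda>\<xi>. (1 + \<xi>) / 2) ` X"
proof -
  have "pmf (P_of_Q X \<omega>) a \<noteq> 0 \<longleftrightarrow> 2 * a - 1 \<in> X" for a
    using node_normalizer_pos weights_pos[of "2 * a - 1"] sqrt_one_minus_square_node_pos[of "2 * a - 1"]
    unfolding pmf_P_of_Q by (auto simp del: real_sqrt_gt_0_iff)
  moreover have "a \<in> (\<lambda>\<xi>. (1 + \<xi>) / 2) ` X \<longleftrightarrow> 2 * a - 1 \<in> X" for a
  proof
    show "a \<in> (\<lambda>\<xi>. (1 + \<xi>) / 2) ` X \<Longrightarrow> 2 * a - 1 \<in> X"
      by (elim imageE) (simp only: rescale_inverse)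
    show "2 * a - 1 \<in> X \<Longrightarrow> a \<in> (\<lambda>\<xi>. (1 + \<xi>) / 2) ` X"
      by (rule rev_image_eqI[of "2 * a - 1"]) (simp_all only: rescale_inverse)
  qed
  ultimately show ?thesis
    unfolding set_pmf_eq by auto
qed

lemma finite_set_pmf_P_of_Q: "finite (set_pmf (P_of_Q X \<omega>))"
  using finite_nodes by (simp add: set_pmf_P_of_Q)

lemma expectation_P_of_Q:
  "measure_pmf.expectation (P_of_Q X \<omega>) (\<lambda>p. sqrt (p * (1 - p)) * g p)
     = (\<Sum>\<xi>\<in>X. \<omega> \<xi> * g ((1 + \<xi>) / 2)) / (2 * node_normalizer X \<omega>)"
proof -
  have "measure_pmf.expectation (P_of_Q X \<omega>) (\<lambda>p. sqrt (p * (1 - p)) * g p)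
      = (\<Sum>\<xi>\<in>X. sqrt ((1 + \<xi>) / 2 * (1 - (1 + \<xi>) / 2)) * g ((1 + \<xi>) / 2) * pmf (P_of_Q X \<omega>) ((1 + \<xi>) / 2))"
    using finite_nodes
    by (subst integral_measure_pmf_real[where A = "(\<lambda>\<xi>. (1 + \<xi>) / 2) ` X"])
       (auto simp: set_pmf_P_of_Q sum.reindex inj_on_def)
  also have "\<dots> = (\<Sum>\<xi>\<in>X. \<omega> \<xi> * g ((1 + \<xi>) / 2) / (2 * node_normalizer X \<omega>))"
  proof (intro sum.cong refl)
    fix \<xi> assume "\<xi> \<in> X"
    then show "sqrt ((1 + \<xi>) / 2 * (1 - (1 + \<xi>) / 2)) * g ((1 + \<xi>) / 2) * pmf (P_of_Q X \<omega>) ((1 + \<xi>) / 2)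
        = \<omega> \<xi> * g ((1 + \<xi>) / 2) / (2 * node_normalizer X \<omega>)"
      unfolding sqrt_bernoulli_variance_rescaled pmf_P_of_Q_node[OF \<open>\<xi> \<in> X\<close>]
      using sqrt_one_minus_square_node_pos[OF \<open>\<xi> \<in> X\<close>] by (simp add: field_simps)
  qed
  finally show ?thesis
    by (simp add: sum_divide_distrib)
qed

lemma finite_bias_dist_P_of_Q:
  assumes "symmetric_qs X \<omega>"
  shows "finite_bias_dist (P_of_Q X \<omega>)"
  unfolding finite_bias_dist_def
proof (intro conjI allI)
  show "finite (set_pmf (P_of_Q X \<omega>))" "set_pmf (P_of_Q X \<omega>) \<subseteq> {0<..<1}"
    using finite_nodes nodes_in_interval by (auto simp: set_pmf_P_of_Q)
  fix a :: real
  define \<xi> where "\<xi> = 2 * a - 1"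
  have "- \<xi> \<in> X \<longleftrightarrow> \<xi> \<in> X"
    using assms unfolding symmetric_qs_def by (metis equation_minus_iff image_eqI)
  moreover have "\<xi> \<in> X \<Longrightarrow> \<omega> (- \<xi>) = \<omega> \<xi>"
    using assms by (simp add: symmetric_qs_def)
  moreover have "2 * (1 - a) - 1 = - \<xi>"
    by (simp add: \<xi>_def)
  ultimately show "pmf (P_of_Q X \<omega>) a = pmf (P_of_Q X \<omega>) (1 - a)"
    unfolding pmf_P_of_Q \<xi>_def[symmetric] by simp
qed

lemma Q_nodes_P_of_Q: "Q_nodes (P_of_Q X \<omega>) = X"
  unfolding Q_nodes_def set_pmf_P_of_Q image_image rescale_inverse by simp

lemma Q_weight_P_of_Q:
  assumes "\<xi> \<in> X"
  shows "Q_weight (P_of_Q X \<omega>) \<xi> = 2 * \<omega> \<xi> / (\<Sum>\<eta>\<in>X. \<omega> \<eta>)"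
proof -
  have moment: "weighted_moment (P_of_Q X \<omega>) 0 = (\<Sum>\<eta>\<in>X. \<omega> \<eta>) / (2 * node_normalizer X \<omega>)"
    using expectation_P_of_Q[of "\<lambda>_. 1"] by (simp add: weighted_moment_def)
  have "(\<Sum>\<eta>\<in>X. \<omega> \<eta>) > 0"
    using finite_nodes nodes_nonempty weights_pos by (intro sum_pos)
  then show ?thesis
    using node_normalizer_pos sqrt_one_minus_square_node_pos[OF assms]
    unfolding Q_weight_eq[OF finite_set_pmf_P_of_Q, of "(1 + \<xi>) / 2", unfolded rescale_inverse]
      sqrt_bernoulli_variance_rescaled pmf_P_of_Q_node[OF assms] moment
    by (simp add: field_simps)
qed

lemma c_indist_P_of_Q:
  assumes quad: "quad_system (c - 1) X \<omega>" and sym: "symmetric_qs X \<omega>"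
  shows "c_indist c (P_of_Q X \<omega>)"
  unfolding c_indist_iff_bias_kernel[OF finite_bias_dist_P_of_Q[OF sym]]
proof (intro allI impI)
  fix u v assume "u + v + 2 \<le> c"
  define F where "F = pcompose (bias_kernel u v) [:1 / 2, 1 / 2:]"
  have "poly [:1 / 2, 1 / 2:] t = (1 + t) / 2" for t :: real
    by simp
  then have poly_F: "poly F = (\<lambda>t. poly (bias_kernel u v) ((1 + t) / 2))"
    by (intro ext) (simp only: F_def poly_pcompose)
  have "degree F \<le> c - 1"
    using degree_bias_kernel[of u v] \<open>u + v + 2 \<le> c\<close> by (simp add: F_def degree_pcompose)
  then have "(\<Sum>\<xi>\<in>X. \<omega> \<xi> * poly F \<xi>) = integral {-1..1} (poly F)"
    using quad unfolding quad_system_def by simp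
  also have "\<dots> = 0"
    unfolding poly_F using has_integral_bias_kernel_rescaled by (rule integral_unique)
  finally show "measure_pmf.expectation (P_of_Q X \<omega>) (\<lambda>p. sqrt (p * (1 - p)) * poly (bias_kernel u v) p) = 0"
    by (simp add: expectation_P_of_Q poly_F)
qed

end

lemma quad_system_sum_weights:
  assumes "quad_system d X \<omega>"
  shows "(\<Sum>\<xi>\<in>X. \<omega> \<xi>) = 2"
proof -
  have "integral {-1..1} (poly 1) = (\<Sum>\<xi>\<in>X. \<omega> \<xi> * poly 1 \<xi>)"
    using assms unfolding quad_system_def by (metis degree_1 le0)
  moreover have "poly 1 = (\<lambda>_. 1::real)"
    by auto
  ultimately show ?thesis
    by simp
qed

lemma quad_system_node_weights: "quad_system d X \<omega> \<Longrightarrow> node_weights X \<omega>"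
  unfolding node_weights_def using quad_system_sum_weights[of d X \<omega>] by (auto simp: quad_system_def)

section \<open>From bias distributions to quadrature systems\<close>

lemma weighted_moment_0_pos:
  assumes "finite_bias_dist P"
  shows "weighted_moment P 0 > 0"
proof -
  have "set_pmf P \<subseteq> {0<..<1}" "finite (set_pmf P)"
    using finite_bias_distD[OF assms] by auto
  then have "weighted_moment P 0 = (\<Sum>p\<in>set_pmf P. sqrt (p * (1 - p)) * pmf P p)"
    unfolding weighted_moment_def by (simp add: integral_measure_pmf_real)
  also have "\<dots> > 0"
    using \<open>set_pmf P \<subseteq> {0<..<1}\<close> \<open>finite (set_pmf P)\<close>
    by (intro sum_pos set_pmf_not_empty) (auto simp: pmf_positive)
  finally show ?thesis .
qed

lemma expectation_weighted_poly:
  assumes "finite (set_pmf P)"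
  shows "measure_pmf.expectation P (\<lambda>p. sqrt (p * (1 - p)) * poly G p)
    = (\<Sum>k\<le>degree G. coeff G k * weighted_moment P k)"
  unfolding poly_altdef sum_distrib_left weighted_moment_def
  using integrable_measure_pmf_finite[OF assms]
  by (subst Bochner_Integration.integral_sum) (auto simp: mult_ac)

lemma weighted_moment_closed_form:
  assumes "finite_bias_dist P" "c_indist c P" "k \<le> c - 1"
  shows "weighted_moment P k = weighted_moment P 0 / real (Suc k)"
  using assms(3)
proof (induction k)
  case (Suc k)
  have "measure_pmf.expectation P (\<lambda>p. sqrt (p * (1 - p)) * poly (bias_kernel k 0) p) = 0"
    using Suc.prems c_indist_iff_bias_kernel[OF assms(1)] assms(2) by auto
  moreover have "(\<lambda>p. sqrt (p * (1 - p)) * poly (bias_kernel k 0) p) =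
      (\<lambda>p. real (Suc k) * (sqrt (p * (1 - p)) * p ^ k) - real (k + 2) * (sqrt (p * (1 - p)) * p ^ Suc k))"
    by (simp add: fun_eq_iff poly_bias_kernel algebra_simps)
  then have "measure_pmf.expectation P (\<lambda>p. sqrt (p * (1 - p)) * poly (bias_kernel k 0) p)
      = real (Suc k) * weighted_moment P k - real (k + 2) * weighted_moment P (Suc k)"
    using finite_bias_distD(1)[OF assms(1)]
    by (simp add: weighted_moment_def integrable_measure_pmf_finite)
  ultimately have "real (k + 2) * weighted_moment P (Suc k) = real (Suc k) * weighted_moment P k"
    by linarith
  also have "\<dots> = weighted_moment P 0"
    using Suc by simp
  finally show ?case
    by (simp add: field_simps)
qed simp

lemma node_weights_Q_nodes:
  assumes "finite_bias_dist P"
  shows "node_weights (Q_nodes P) (Q_weight P)"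
proof
  have fin: "finite (set_pmf P)" and sub: "set_pmf P \<subseteq> {0<..<1}"
    using finite_bias_distD[OF assms] by auto
  show "finite (Q_nodes P)" "Q_nodes P \<noteq> {}"
    using fin by (simp_all add: Q_nodes_def set_pmf_not_empty)
  show "Q_nodes P \<subseteq> {-1<..<1}"
    using sub by (force simp: Q_nodes_def)
  show "Q_weight P \<xi> > 0" if "\<xi> \<in> Q_nodes P" for \<xi>
  proof -
    obtain p where "p \<in> set_pmf P" "\<xi> = 2 * p - 1"
      using \<open>\<xi> \<in> Q_nodes P\<close> by (auto simp: Q_nodes_def)
    moreover have "p \<in> set_pmf P \<Longrightarrow> 0 < p * (1 - p)"
      using sub by auto
    ultimately show ?thesis
      using weighted_moment_0_pos[OF assms] by (simp add: Q_weight_eq[OF fin] pmf_positive)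
  qed
qed

lemma sum_Q_nodes:
  assumes "finite_bias_dist P"
  shows "(\<Sum>\<xi>\<in>Q_nodes P. Q_weight P \<xi> * g \<xi>)
    = 2 * measure_pmf.expectation P (\<lambda>p. sqrt (p * (1 - p)) * g (2 * p - 1)) / weighted_moment P 0"
proof -
  have fin: "finite (set_pmf P)"
    using assms by (rule finite_bias_distD)
  have "(\<Sum>\<xi>\<in>Q_nodes P. Q_weight P \<xi> * g \<xi>) = (\<Sum>p\<in>set_pmf P. Q_weight P (2 * p - 1) * g (2 * p - 1))"
    unfolding Q_nodes_def by (simp add: sum.reindex inj_on_def)
  also have "\<dots> = (\<Sum>p\<in>set_pmf P. 2 * (sqrt (p * (1 - p)) * g (2 * p - 1) * pmf P p) / weighted_moment P 0)"
    unfolding Q_weight_eq[OF fin] by (simp add: mult_ac)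
  also have "\<dots> = 2 * measure_pmf.expectation P (\<lambda>p. sqrt (p * (1 - p)) * g (2 * p - 1)) / weighted_moment P 0"
    using fin by (simp add: integral_measure_pmf_real sum_divide_distrib[symmetric] sum_distrib_left)
  finally show ?thesis .
qed

lemma quad_system_Q_nodes:
  assumes "finite_bias_dist P" "c_indist c P"
  shows "quad_system (c - 1) (Q_nodes P) (Q_weight P)"
proof -
  interpret node_weights "Q_nodes P" "Q_weight P"
    using assms(1) by (rule node_weights_Q_nodes)
  have "integral {-1..1} (poly F) = (\<Sum>\<xi>\<in>Q_nodes P. Q_weight P \<xi> * poly F \<xi>)"
    if "degree F \<le> c - 1" for F
  proof -
    define G where "G = pcompose F [:-1, 2:]"
    have poly_G: "poly G p = poly F (2 * p - 1)" for p
      by (simp add: G_def poly_pcompose algebra_simps)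
    have deg: "degree G \<le> c - 1"
      using that by (simp add: G_def degree_pcompose)
    have "(\<Sum>\<xi>\<in>Q_nodes P. Q_weight P \<xi> * poly F \<xi>)
        = 2 * measure_pmf.expectation P (\<lambda>p. sqrt (p * (1 - p)) * poly G p) / weighted_moment P 0"
      by (simp add: sum_Q_nodes[OF assms(1)] poly_G)
    also have "measure_pmf.expectation P (\<lambda>p. sqrt (p * (1 - p)) * poly G p)
        = (\<Sum>k\<le>degree G. coeff G k * weighted_moment P k)"
      using finite_bias_distD(1)[OF assms(1)] by (rule expectation_weighted_poly)
    also have "\<dots> = (\<Sum>k\<le>degree G. coeff G k * (weighted_moment P 0 / real (Suc k)))"
    proof (intro sum.cong refl)
      fix k assume "k \<in> {..degree G}"
      then show "coeff G k * weighted_moment P k = coeff G k * (weighted_moment P 0 / real (Suc k))"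
        using deg weighted_moment_closed_form[OF assms, of k] by simp
    qed
    also have "2 * (\<Sum>k\<le>degree G. coeff G k * (weighted_moment P 0 / real (Suc k))) / weighted_moment P 0
        = (\<Sum>k\<le>degree G. coeff G k * (2 / real (Suc k)))"
      using weighted_moment_0_pos[OF assms(1)]
      unfolding sum_distrib_left sum_divide_distrib by (intro sum.cong refl) simp
    also have "\<dots> = integral {-1..1} (\<lambda>t. poly G ((1 + t) / 2))"
      by (rule has_integral_poly_rescaled[THEN integral_unique, symmetric])
    also have "(\<lambda>t. poly G ((1 + t) / 2)) = poly F"
      unfolding poly_G rescale_inverse ..
    finally show ?thesis ..
  qed
  then show ?thesis
    unfolding quad_system_def using finite_nodes nodes_in_interval weights_pos by blast
qed

lemma symmetric_qs_Q_nodes: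
  assumes "finite_bias_dist P"
  shows "symmetric_qs (Q_nodes P) (Q_weight P)"
  unfolding symmetric_qs_def
proof (intro conjI ballI)
  have "(\<lambda>p. 1 - p) ` set_pmf P = set_pmf P"
    using map_pmf_one_minus[OF assms] by (metis set_map_pmf)
  moreover have "uminus ` Q_nodes P = (\<lambda>p. 2 * p - 1) ` (\<lambda>p. 1 - p) ` set_pmf P"
    unfolding Q_nodes_def image_image by (intro image_cong refl) (simp add: algebra_simps)
  ultimately show "uminus ` Q_nodes P = Q_nodes P"
    by (simp add: Q_nodes_def)
next
  fix \<xi> assume "\<xi> \<in> Q_nodes P"
  define p where "p = (1 + \<xi>) / 2"
  have "Q_weight P (- \<xi>) = Q_weight P (2 * (1 - p) - 1)"
    by (simp add: p_def field_simps)
  also have "\<dots> = Q_weight P (2 * p - 1)"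
    unfolding Q_weight_eq[OF finite_bias_distD(1)[OF assms]] finite_bias_distD(3)[OF assms]
    by (simp add: mult.commute)
  also have "\<dots> = Q_weight P \<xi>"
    by (simp add: p_def field_simps)
  finally show "Q_weight P (- \<xi>) = Q_weight P \<xi>" .
qed

lemma P_of_Q_inverse:
  assumes "finite_bias_dist P"
  shows "P_of_Q (Q_nodes P) (Q_weight P) = P"
proof -
  interpret node_weights "Q_nodes P" "Q_weight P"
    using assms by (rule node_weights_Q_nodes)
  note fin = finite_bias_distD(1)[OF assms] and sub = finite_bias_distD(2)[OF assms]
  have "measure_pmf.expectation P (\<lambda>p. sqrt (p * (1 - p)) * (1 / sqrt (1 - (2 * p - 1)\<^sup>2)))
      = measure_pmf.expectation P (\<lambda>_. 1 / 2)"
  proof (intro integral_cong_AE AE_pmfI)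
    fix p assume "p \<in> set_pmf P"
    then have "0 < p" "p < 1"
      using sub by auto
    then show "sqrt (p * (1 - p)) * (1 / sqrt (1 - (2 * p - 1)\<^sup>2)) = 1 / 2"
      unfolding sqrt_one_minus_square_rescaled by simp
  qed simp_all
  then have normalizer: "node_normalizer (Q_nodes P) (Q_weight P) = 1 / weighted_moment P 0"
    unfolding node_normalizer_def using sum_Q_nodes[OF assms, of "\<lambda>\<xi>. 1 / sqrt (1 - \<xi>\<^sup>2)"] by simp
  show ?thesis
  proof (rule pmf_eqI)
    fix a
    have node_iff: "2 * a - 1 \<in> Q_nodes P \<longleftrightarrow> a \<in> set_pmf P"
      unfolding Q_nodes_def by auto
    show "pmf (P_of_Q (Q_nodes P) (Q_weight P)) a = pmf P a"
    proof (cases "a \<in> set_pmf P")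
      case True
      then have "0 < a" "a < 1"
        using sub by auto
      then show ?thesis
        using True weighted_moment_0_pos[OF assms]
        unfolding pmf_P_of_Q node_iff normalizer Q_weight_eq[OF fin] sqrt_one_minus_square_rescaled
        by (simp add: field_simps)
    next
      case False
      then show ?thesis
        unfolding pmf_P_of_Q node_iff by (simp add: set_pmf_iff)
    qed
  qed
qed

theorem theorem1:
  fixes c :: nat
  assumes "c \<ge> 1"
  shows "(\<forall>X \<omega>. quad_system (c - 1) X \<omega> \<and> symmetric_qs X \<omega> \<longrightarrow>
            finite_bias_dist (P_of_Q X \<omega>) \<and> c_indist c (P_of_Q X \<omega>) \<and>
            Q_nodes (P_of_Q X \<omega>) = X \<and> (\<forall>\<xi>\<in>X. Q_weight (P_of_Q X \<omega>) \<xi> = \<omega> \<xi>))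
       \<and> (\<forall>P. finite_bias_dist P \<and> c_indist c P \<longrightarrow>
            quad_system (c - 1) (Q_nodes P) (Q_weight P) \<and> symmetric_qs (Q_nodes P) (Q_weight P) \<and>
            P_of_Q (Q_nodes P) (Q_weight P) = P)"
proof (intro conjI allI impI; elim conjE)
  fix X \<omega> assume quad: "quad_system (c - 1) X \<omega>" and sym: "symmetric_qs X \<omega>"
  interpret node_weights X \<omega>
    using quad by (rule quad_system_node_weights)
  show "finite_bias_dist (P_of_Q X \<omega>)" "c_indist c (P_of_Q X \<omega>)" "Q_nodes (P_of_Q X \<omega>) = X"
    using finite_bias_dist_P_of_Q[OF sym] c_indist_P_of_Q[OF quad sym] Q_nodes_P_of_Q by auto
  show "\<forall>\<xi>\<in>X. Q_weight (P_of_Q X \<omega>) \<xi> = \<omega> \<xi>"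
    using Q_weight_P_of_Q quad_system_sum_weights[OF quad] by simp
next
  fix P assume "finite_bias_dist P" "c_indist c P"
  then show "quad_system (c - 1) (Q_nodes P) (Q_weight P)" "symmetric_qs (Q_nodes P) (Q_weight P)"
    "P_of_Q (Q_nodes P) (Q_weight P) = P"
    by (blast intro: quad_system_Q_nodes symmetric_qs_Q_nodes P_of_Q_inverse)+
qed

end
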